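(* For every $n\in\mathbb N$, $\mathbb{T}_n$ (with the maps $\mathbb{T}_n(f)$ and supports $\operatorname{supp}^{\mathbb{T}_n}$) and $\mathbb{T}_{n+1}^-$ (with the maps $\mathbb{T}_{n+1}^-(f)$ and supports $\operatorname{supp}^{\mathbb{T}_{n+1}^-}$) are normal PO-dilators.
   Context: A quasi embedding between partial orders $X,Y$ is a function $f$ with $f(x)\leq_Y f(y)\Rightarrow x\leq_X y$; an embedding also satisfies the converse. $\mathrm{PO}$ is the category of partial orders and quasi embeddings. $[X]^{<\omega}$ denotes the finite subsets of $X$, with $[f]^{<\omega}(a)=\{f(x)\mid x\in a\}$. A PO-dilator is a functor $W:\mathrm{PO}\to\mathrm{PO}$ mapping embeddings to embeddings, with a natural transformation $\operatorname{supp}^W:W\Rightarrow[\cdot]^{<\omega}$ such that for every embedding $f:X\to Y$, $\operatorname{rng}(W(f))=\{\sigma\in W(Y)\mid\operatorname{supp}^W_Y(\sigma)\subseteq\operatorname{rng}(f)\}$. For finite $a,b\subseteq X$, $a\leq^{\mathrm{fin}}_X b$ iff every $x\in a$ has some $y\in b$ with $x\leq_X y$. $W$ is normal if $\sigma\leq_{W(X)}\tau$ implies $\operatorname{supp}^W_X(\sigma)\leq^{\mathrm{fin}}_X\operatorname{supp}^W_X(\tau)$. For a partial order $X$, $M(X)$ is the set of finite multisets $[x_0,\dots,x_{m-1}]$ with elements from $X$, ordered by $[x_0,\dots,x_{m-1}]\leq_{M(X)}[y_0,\dots,y_{k-1}]$ iff there is an injection $g$ with $x_i\leq_X y_{g(i)}$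 for all $i<m$. For $n\in\mathbb N$ and a partial order $X$, $\mathbb{T}_n(X)$ is generated by: $\overline x$ for each $x\in X$; $i\star\sigma$ for each $\sigma=[t_0,\dots,t_{m-1}]\in M(\mathbb{T}_n(X))$ and $i<n$. For $n>0$, $\mathbb{T}_n^-(X)=\{\overline x\mid x\in X\}\cup\{0\star\sigma\mid\sigma\in M(\mathbb{T}_n(X))\}$. The relation $\leq_{\mathbb{T}_n(X)}$ is defined recursively: $\overline x\leq t$ iff either $t=\overline y$ with $x\leq_X y$, or $t=j\star[t_0,\dots,t_{m-1}]$ and $\overline x\leq t_l$ for some $l<m$; $i\star\sigma\leq t$ iff either $t=i\star\tau$ with $\sigma\leq_{M(\mathbb{T}_n(X))}\tau$, or $t=j\star[t_0,\dots,t_{m-1}]$ with $j\geq i$ and $i\star\sigma\leq t_l$ for some $l<m$. This is a partial order; $\leq_{\mathbb{T}_n^-(X)}$ is its restriction to $\mathbb{T}_n^-(X)$. For a quasi embedding $f:X\to Y$, $\mathbb{T}_n(f)(\overline x)=\overline{f(x)}$ and $\mathbb{T}_n(f)(i\star[t_0,\dots,t_{m-1}])=i\star[\mathbb{T}_n(f)(t_0),\dots,\mathbb{T}_n(f)(t_{m-1})]$; $\mathbb{T}_n^-(f)$ is its restriction $\mathbb{T}_n^-(X)\to\mathbb{T}_n^-(Y)$. Supports: $\operatorname{supp}^{\mathbb{T}_n}_X(\overline x)=\{x\}$, $\operatorname{supp}^{\mathbb{T}_n}_X(i\star[t_0,\dots,t_{m-1}])=\bigcup_{l<m}\operatorname{supp}^{\mathbb{T}_n}_X(t_l)$;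 $\operatorname{supp}^{\mathbb{T}_n^-}_X$ is its restriction to $\mathbb{T}_n^-(X)$. *)

theory Defs
  imports Main "HOL-Library.Multiset" "HOL-Library.FuncSet"
begin

text \<open>A partial order X is represented by a carrier set A together with a relation le
  (only its values on A matter).\<close>

definition po :: "'a set \<Rightarrow> ('a \<Rightarrow> 'a \<Rightarrow> bool) \<Rightarrow> bool" where
  "po A le \<longleftrightarrow> (\<forall>x\<in>A. le x x)
     \<and> (\<forall>x\<in>A. \<forall>y\<in>A. le x y \<and> le y x \<longrightarrow> x = y)
     \<and> (\<forall>x\<in>A. \<forall>y\<in>A. \<forall>z\<in>A. le x y \<and> le y z \<longrightarrow> le x z)"

definition quasi_emb :: "'a set \<Rightarrow> ('a \<Rightarrow> 'a \<Rightarrow> bool) \<Rightarrow> 'b set \<Rightarrow> ('b \<Rightarrow> 'b \<Rightarrow> bool)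
    \<Rightarrow> ('a \<Rightarrow> 'b) \<Rightarrow> bool" where
  "quasi_emb A leA B leB f \<longleftrightarrow> f \<in> A \<rightarrow> B \<and> (\<forall>x\<in>A. \<forall>y\<in>A. leB (f x) (f y) \<longrightarrow> leA x y)"

definition emb :: "'a set \<Rightarrow> ('a \<Rightarrow> 'a \<Rightarrow> bool) \<Rightarrow> 'b set \<Rightarrow> ('b \<Rightarrow> 'b \<Rightarrow> bool)
    \<Rightarrow> ('a \<Rightarrow> 'b) \<Rightarrow> bool" where
  "emb A leA B leB f \<longleftrightarrow> quasi_emb A leA B leB f \<and> (\<forall>x\<in>A. \<forall>y\<in>A. leA x y \<longrightarrow> leB (f x) (f y))"

definition fin_le :: "('a \<Rightarrow> 'a \<Rightarrow> bool) \<Rightarrow> 'a set \<Rightarrow> 'a set \<Rightarrow> bool" where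
  "fin_le le a b \<longleftrightarrow> (\<forall>x\<in>a. \<exists>y\<in>b. le x y)"

text \<open>Since HOL definitions cannot take polymorphic arguments, the conditions are stated for
  a functor given by its instances at three (arbitrary) types 'a, 'b, 'c:
  object part W (carrier) and Wle (order), support supp, and the morphism part at the
  types 'a\<rightarrow>'a, 'a\<rightarrow>'b, 'b\<rightarrow>'c, 'a\<rightarrow>'c.  Morphisms of PO are quasi embeddings between
  partial orders, considered as functions on the carrier.\<close>

definition normal_PO_dilator ::
  "('a set \<Rightarrow> 'x set) \<Rightarrow> (('a \<Rightarrow> 'a \<Rightarrow> bool) \<Rightarrow> 'x \<Rightarrow> 'x \<Rightarrow> bool) \<Rightarrow> ('x \<Rightarrow> 'a set)
   \<Rightarrow> ('b set \<Rightarrow> 'y set) \<Rightarrow> (('b \<Rightarrow> 'b \<Rightarrow> bool) \<Rightarrow> 'y \<Rightarrow> 'y \<Rightarrow> bool) \<Rightarrow> ('y \<Rightarrow> 'b set)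
   \<Rightarrow> (('a \<Rightarrow> 'a) \<Rightarrow> 'x \<Rightarrow> 'x) \<Rightarrow> (('a \<Rightarrow> 'b) \<Rightarrow> 'x \<Rightarrow> 'y) \<Rightarrow> (('b \<Rightarrow> 'c) \<Rightarrow> 'y \<Rightarrow> 'z)
   \<Rightarrow> (('a \<Rightarrow> 'c) \<Rightarrow> 'x \<Rightarrow> 'z) \<Rightarrow> bool" where
  "normal_PO_dilator Wa Wlea suppa Wb Wleb suppb Faa Fab Fbc Fac \<longleftrightarrow>
     \<comment> \<open>W maps partial orders to partial orders\<close>
     (\<forall>A leA. po A leA \<longrightarrow> po (Wa A) (Wlea leA))
     \<comment> \<open>W maps quasi embeddings to quasi embeddings\<close>
   \<and> (\<forall>A leA B leB f. po A leA \<and> po B leB \<and> quasi_emb A leA B leB f \<longrightarrow>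
        quasi_emb (Wa A) (Wlea leA) (Wb B) (Wleb leB) (Fab f))
     \<comment> \<open>W(f) depends only on f as a map on the carrier\<close>
   \<and> (\<forall>A leA B leB f g. po A leA \<and> po B leB \<and> quasi_emb A leA B leB f
        \<and> quasi_emb A leA B leB g \<and> (\<forall>x\<in>A. f x = g x) \<longrightarrow> (\<forall>\<sigma>\<in>Wa A. Fab f \<sigma> = Fab g \<sigma>))
     \<comment> \<open>functoriality: identities\<close>
   \<and> (\<forall>A leA. po A leA \<longrightarrow> (\<forall>\<sigma>\<in>Wa A. Faa id \<sigma> = \<sigma>))
     \<comment> \<open>functoriality: composition\<close>
   \<and> (\<forall>A leA B leB C leC f g. po A leA \<and> po B leB \<and> po C leC
        \<and> quasi_emb A leA B leB f \<and> quasi_emb B leB C leC g \<longrightarrow>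
        (\<forall>\<sigma>\<in>Wa A. Fac (g \<circ> f) \<sigma> = Fbc g (Fab f \<sigma>)))
     \<comment> \<open>W maps embeddings to embeddings\<close>
   \<and> (\<forall>A leA B leB f. po A leA \<and> po B leB \<and> emb A leA B leB f \<longrightarrow>
        emb (Wa A) (Wlea leA) (Wb B) (Wleb leB) (Fab f))
     \<comment> \<open>supp_X : W(X) \<rightarrow> [X]^<omega>\<close>
   \<and> (\<forall>A leA. po A leA \<longrightarrow> (\<forall>\<sigma>\<in>Wa A. finite (suppa \<sigma>) \<and> suppa \<sigma> \<subseteq> A))
     \<comment> \<open>naturality of supp\<close>
   \<and> (\<forall>A leA B leB f. po A leA \<and> po B leB \<and> quasi_emb A leA B leB f \<longrightarrow>
        (\<forall>\<sigma>\<in>Wa A. suppb (Fab f \<sigma>) = f ` suppa \<sigma>))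
     \<comment> \<open>support condition\<close>
   \<and> (\<forall>A leA B leB f. po A leA \<and> po B leB \<and> emb A leA B leB f \<longrightarrow>
        Fab f ` Wa A = {\<tau> \<in> Wb B. suppb \<tau> \<subseteq> f ` A})
     \<comment> \<open>normality\<close>
   \<and> (\<forall>A leA. po A leA \<longrightarrow> (\<forall>\<sigma>\<in>Wa A. \<forall>\<tau>\<in>Wa A. Wlea leA \<sigma> \<tau> \<longrightarrow>
        fin_le leA (suppa \<sigma>) (suppa \<tau>)))"

definition mle :: "('a \<Rightarrow> 'a \<Rightarrow> bool) \<Rightarrow> 'a multiset \<Rightarrow> 'a multiset \<Rightarrow> bool" where
  "mle R \<sigma> \<tau> \<longleftrightarrow> (\<exists>xs ys g. mset xs = \<sigma> \<and> mset ys = \<tau>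
      \<and> inj_on g {..<length xs} \<and> g ` {..<length xs} \<subseteq> {..<length ys}
      \<and> (\<forall>i<length xs. R (xs ! i) (ys ! g i)))"

lemma mle_mono [mono]: "R \<le> S \<Longrightarrow> mle R \<le> mle S"
proof (intro le_funI le_boolI)
  fix \<sigma> \<tau> assume RS: "R \<le> S" and "mle R \<sigma> \<tau>"
  then obtain xs ys g where h: "mset xs = \<sigma>" "mset ys = \<tau>" "inj_on g {..<length xs}"
    "g ` {..<length xs} \<subseteq> {..<length ys}" "\<forall>i<length xs. R (xs ! i) (ys ! g i)"
    unfolding mle_def by auto
  have "\<forall>i<length xs. S (xs ! i) (ys ! g i)" using h(5) RS by (auto simp: le_fun_def)
  with h show "mle S \<sigma> \<tau>" unfolding mle_def by blast
qed

text \<open>Var x is \<open>x\<close> with a bar; Node i \<sigma> is i \<star> \<sigma>.\<close>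
datatype 'a tm = Var 'a | Node nat "'a tm multiset"

inductive_set Tset :: "nat \<Rightarrow> 'a set \<Rightarrow> 'a tm set" for n :: nat and A :: "'a set" where
  Var: "x \<in> A \<Longrightarrow> Var x \<in> Tset n A"
| Node: "i < n \<Longrightarrow> (\<forall>t\<in>#\<sigma>. t \<in> Tset n A) \<Longrightarrow> Node i \<sigma> \<in> Tset n A"

text \<open>T_n^-(X), meaningful for n > 0 (used as T_{n+1}^-).\<close>
definition Tminus :: "nat \<Rightarrow> 'a set \<Rightarrow> 'a tm set" where
  "Tminus n A = {Var x | x. x \<in> A} \<union> {Node 0 \<sigma> | \<sigma>. set_mset \<sigma> \<subseteq> Tset n A}"

text \<open>The order on T_n(X) (the same recursive clauses for every n; it is only used on the
  carrier Tset n A).\<close>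
inductive tle :: "('a \<Rightarrow> 'a \<Rightarrow> bool) \<Rightarrow> 'a tm \<Rightarrow> 'a tm \<Rightarrow> bool" for le where
  var_var: "le x y \<Longrightarrow> tle le (Var x) (Var y)"
| var_node: "t \<in># \<tau> \<Longrightarrow> tle le (Var x) t \<Longrightarrow> tle le (Var x) (Node j \<tau>)"
| node_node: "mle (tle le) \<sigma> \<tau> \<Longrightarrow> tle le (Node i \<sigma>) (Node i \<tau>)"
| node_below: "i \<le> j \<Longrightarrow> t \<in># \<tau> \<Longrightarrow> tle le (Node i \<sigma>) t \<Longrightarrow> tle le (Node i \<sigma>) (Node j \<tau>)"

text \<open>T_n(f) is map_tm f and supp^{T_n} is set_tm (both generated by the datatype package;
  set_tm (Node i \<sigma>) is the union of set_tm over the elements of \<sigma>).\<close>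

end

theory Submission
  imports Defs
begin

(* Reflexivity, transitivity and antisymmetry are
   inherited from X by induction on terms; for the multiset embedding order one uses that
   \<sigma> embeds into \<tau> iff \<sigma> is rel_mset-related to a submultiset of \<tau>. For antisymmetry,
   comparable terms have comparable sizes, so mutually comparable nodes share their index and
   have mutually embedded argument multisets, which for a partial order must coincide since
   both multisets have the same number of elements in every up-set.
   The order is defined uniformly in X, so renaming atoms along f preserves it when f is
   monotone and reflects it when f reflects the order. Supports are the atom sets, so
   functoriality and naturality are BNF laws of tm, and the support condition holds because
   T_n(X) and T_{n+1}^-(X) are closed under renaming atoms along any map, in particular along
   inv_into A f. *)

section \<open>Multisets under the embedding order\<close>

lemma mle_iff_rel_mset: "mle R \<sigma> \<tau> \<longleftrightarrow> (\<exists>\<tau>'. \<tau>' \<subseteq># \<tau> \<and> rel_mset R \<sigma> \<tau>')"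
proof
  assume "mle R \<sigma> \<tau>"
  then obtain xs ys g where h: "mset xs = \<sigma>" "mset ys = \<tau>" "inj_on g {..<length xs}"
    "g ` {..<length xs} \<subseteq> {..<length ys}" "\<forall>i<length xs. R (xs ! i) (ys ! g i)"
    unfolding mle_def by auto
  define idx where "idx = map g [0..<length xs]"
  define ys' where "ys' = map (nth ys) idx"
  have la: "list_all2 R xs ys'" using h(5) by (auto simp: list_all2_conv_all_nth ys'_def idx_def)
  have dist: "distinct idx" using h(3) by (simp add: idx_def distinct_map lessThan_atLeast0)
  have "mset idx = mset_set (set idx)" using dist by (simp add: mset_set_set)
  also have "\<dots> \<subseteq># mset_set {0..<length ys}"
    using h(4) by (intro subset_imp_msubset_mset_set) (auto simp: idx_def image_subset_iff)
  also have "\<dots> = mset [0..<length ys]" by (simp add: mset_set_set[symmetric])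
  finally have "image_mset (nth ys) (mset idx) \<subseteq># image_mset (nth ys) (mset [0..<length ys])"
    by (rule image_mset_subseteq_mono)
  moreover have "image_mset (nth ys) (mset [0..<length ys]) = mset ys"
    by (metis map_nth mset_map)
  ultimately have "mset ys' \<subseteq># \<tau>" using h(2) by (simp add: ys'_def)
  moreover have "rel_mset R \<sigma> (mset ys')" using la h(1) unfolding rel_mset_def by blast
  ultimately show "\<exists>\<tau>'. \<tau>' \<subseteq># \<tau> \<and> rel_mset R \<sigma> \<tau>'" by blast
next
  assume "\<exists>\<tau>'. \<tau>' \<subseteq># \<tau> \<and> rel_mset R \<sigma> \<tau>'"
  then obtain \<tau>' \<rho> where t: "\<tau> = \<tau>' + \<rho>" and r: "rel_mset R \<sigma> \<tau>'"
    by (auto simp: subset_mset.le_iff_add)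
  obtain xs ys' where x: "mset xs = \<sigma>" "mset ys' = \<tau>'" "list_all2 R xs ys'"
    using r unfolding rel_mset_def by blast
  obtain zs where z: "mset zs = \<rho>" using ex_mset by blast
  have "mset (ys' @ zs) = \<tau>" using x z t by simp
  moreover have "\<forall>i<length xs. R (xs ! i) ((ys' @ zs) ! id i)"
    using x(3) by (auto simp: list_all2_conv_all_nth nth_append)
  moreover have "id ` {..<length xs} \<subseteq> {..<length (ys' @ zs)}"
    using x(3) by (auto simp: list_all2_conv_all_nth)
  ultimately show "mle R \<sigma> \<tau>" unfolding mle_def using x(1)
    by (intro exI[of _ xs] exI[of _ "ys' @ zs"] exI[of _ id]) auto
qed

lemma rel_mset_subset_mset:
  "rel_mset R M N \<Longrightarrow> M' \<subseteq># M \<Longrightarrow> \<exists>N'. N' \<subseteq># N \<and> rel_mset R M' N'"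
proof (induction M' arbitrary: M N)
  case empty
  show ?case by (auto simp: rel_mset_Zero)
next
  case (add a M')
  have "a \<in># M" using add.prems(2) by (simp add: mset_subset_eq_insertD)
  then obtain M0 where M: "M = add_mset a M0" by (metis multi_member_split)
  with add.prems(2) have "M' \<subseteq># M0" by simp
  from add.prems(1) have "rel_mset R (add_mset a M0) N" by (simp only: M)
  then obtain b N0 where N: "N = add_mset b N0" "R a b" "rel_mset R M0 N0"
    by (blast dest: msed_rel_invL)
  obtain N0' where "N0' \<subseteq># N0" "rel_mset R M' N0'"
    using add.IH[OF \<open>rel_mset R M0 N0\<close> \<open>M' \<subseteq># M0\<close>] by blast
  with N show ?case by (auto intro!: exI[of _ "add_mset b N0'"] rel_mset_Plus)
qed

lemma subset_mset_image_mset: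
  assumes "M' \<subseteq># image_mset f M"
  shows "\<exists>M0. M0 \<subseteq># M \<and> M' = image_mset f M0"
proof -
  have "rel_mset (\<lambda>b a. b = f a) (image_mset f M) M"
    unfolding multiset.rel_map by (rule multiset.rel_refl) simp
  from rel_mset_subset_mset[OF this assms] obtain M0
    where "M0 \<subseteq># M" "rel_mset (\<lambda>b a. b = f a) M' M0" by blast
  moreover from this(2) have "rel_mset (=) M' (image_mset f M0)"
    by (simp add: multiset.rel_map)
  then have "M' = image_mset f M0" by (simp add: multiset.rel_eq)
  ultimately show ?thesis by blast
qed

lemma mle_mono_strong:
  assumes "mle R \<sigma> \<tau>" and "\<And>a b. a \<in># \<sigma> \<Longrightarrow> b \<in># \<tau> \<Longrightarrow> R a b \<Longrightarrow> S a b"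
  shows "mle S \<sigma> \<tau>"
proof -
  obtain \<tau>' where "\<tau>' \<subseteq># \<tau>" "rel_mset R \<sigma> \<tau>'" using assms(1) mle_iff_rel_mset by blast
  moreover from this have "rel_mset S \<sigma> \<tau>'"
    by (auto intro: multiset.rel_mono_strong assms(2) dest: mset_subset_eqD)
  ultimately show ?thesis using mle_iff_rel_mset by blast
qed

lemma mle_memD: "mle R \<sigma> \<tau> \<Longrightarrow> a \<in># \<sigma> \<Longrightarrow> \<exists>b\<in>#\<tau>. R a b"
  by (metis mle_iff_rel_mset multi_member_split msed_rel_invL mset_subset_eqD union_single_eq_member)

lemma mle_relcompp: "mle R \<sigma> \<tau> \<Longrightarrow> mle S \<tau> \<rho> \<Longrightarrow> mle (R OO S) \<sigma> \<rho>"
proof -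
  assume "mle R \<sigma> \<tau>" "mle S \<tau> \<rho>"
  then obtain \<tau>' \<rho>' where "\<tau>' \<subseteq># \<tau>" "rel_mset R \<sigma> \<tau>'" "\<rho>' \<subseteq># \<rho>" "rel_mset S \<tau> \<rho>'"
    using mle_iff_rel_mset by metis
  moreover from rel_mset_subset_mset[OF \<open>rel_mset S \<tau> \<rho>'\<close> \<open>\<tau>' \<subseteq># \<tau>\<close>] obtain \<rho>''
    where "\<rho>'' \<subseteq># \<rho>'" "rel_mset S \<tau>' \<rho>''" by blast
  ultimately have "\<rho>'' \<subseteq># \<rho>" "rel_mset (R OO S) \<sigma> \<rho>''"
    by (auto simp: multiset.rel_compp)
  then show "mle (R OO S) \<sigma> \<rho>" using mle_iff_rel_mset by blast
qed

lemma mle_trans: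
  assumes "mle R \<sigma> \<tau>" "mle S \<tau> \<rho>"
    and "\<And>a b c. a \<in># \<sigma> \<Longrightarrow> b \<in># \<tau> \<Longrightarrow> c \<in># \<rho> \<Longrightarrow> R a b \<Longrightarrow> S b c \<Longrightarrow> T a c"
  shows "mle T \<sigma> \<rho>"
proof -
  have "mle (\<lambda>a b. R a b \<and> a \<in># \<sigma> \<and> b \<in># \<tau>) \<sigma> \<tau>" using assms(1) by (rule mle_mono_strong) simp
  from mle_relcompp[OF this assms(2)] show ?thesis by (rule mle_mono_strong) (use assms(3) in blast)
qed

lemma mle_image_mset:
  "mle R (image_mset f \<sigma>) (image_mset g \<tau>) \<longleftrightarrow> mle (\<lambda>a b. R (f a) (g b)) \<sigma> \<tau>"
proof
  assume "mle R (image_mset f \<sigma>) (image_mset g \<tau>)"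
  then obtain \<tau>' where \<tau>': "\<tau>' \<subseteq># image_mset g \<tau>" "rel_mset R (image_mset f \<sigma>) \<tau>'"
    using mle_iff_rel_mset by blast
  then obtain \<tau>0 where "\<tau>0 \<subseteq># \<tau>" "\<tau>' = image_mset g \<tau>0"
    using subset_mset_image_mset by blast
  with \<tau>'(2) show "mle (\<lambda>a b. R (f a) (g b)) \<sigma> \<tau>"
    using mle_iff_rel_mset by (auto simp: multiset.rel_map)
next
  assume "mle (\<lambda>a b. R (f a) (g b)) \<sigma> \<tau>"
  then obtain \<tau>' where "\<tau>' \<subseteq># \<tau>" "rel_mset (\<lambda>a b. R (f a) (g b)) \<sigma> \<tau>'"
    using mle_iff_rel_mset by blast
  then have "image_mset g \<tau>' \<subseteq># image_mset g \<tau>" "rel_mset R (image_mset f \<sigma>) (image_mset g \<tau>')"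
    by (auto simp: multiset.rel_map image_mset_subseteq_mono)
  then show "mle R (image_mset f \<sigma>) (image_mset g \<tau>)" using mle_iff_rel_mset by blast
qed

lemma mle_refl: "(\<And>a. a \<in># \<sigma> \<Longrightarrow> R a a) \<Longrightarrow> mle R \<sigma> \<sigma>"
  using mle_iff_rel_mset multiset.rel_refl_strong by blast

lemma mle_imp_size_le: "mle R \<sigma> \<tau> \<Longrightarrow> size \<sigma> \<le> size \<tau>"
  using mle_iff_rel_mset rel_mset_size size_mset_mono by metis

lemma mle_imp_rel_mset: "mle R \<sigma> \<tau> \<Longrightarrow> size \<tau> \<le> size \<sigma> \<Longrightarrow> rel_mset R \<sigma> \<tau>"
  by (metis mle_iff_rel_mset rel_mset_size subset_mset.add_diff_inverse
      size_Diff_submset diff_is_0_eq size_eq_0_iff_empty add_0_right)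

lemma size_multiset_mono_rel_mset:
  "rel_mset R M N \<Longrightarrow> (\<And>a b. R a b \<Longrightarrow> f a \<le> f b) \<Longrightarrow> size_multiset f M \<le> size_multiset f N"
  by (induction rule: rel_mset_induct) (auto simp: add_mono)

lemma size_multiset_mono_mle:
  assumes "mle R \<sigma> \<tau>" and "\<And>a b. a \<in># \<sigma> \<Longrightarrow> b \<in># \<tau> \<Longrightarrow> R a b \<Longrightarrow> f a \<le> f b"
  shows "size_multiset f \<sigma> \<le> size_multiset f \<tau>"
proof -
  have "mle (\<lambda>a b. f a \<le> f b) \<sigma> \<tau>" using assms by (rule mle_mono_strong)
  then obtain \<tau>' where "\<tau>' \<subseteq># \<tau>" "rel_mset (\<lambda>a b. f a \<le> f b) \<sigma> \<tau>'"
    using mle_iff_rel_mset by blast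
  then show ?thesis
    by (auto simp: subset_mset.le_iff_add dest: size_multiset_mono_rel_mset[of _ _ _ f])
qed

lemma size_filter_mset_le_if_rel_mset:
  assumes "rel_mset R \<sigma> \<tau>" and "\<And>a b. a \<in> U \<Longrightarrow> R a b \<Longrightarrow> b \<in> U"
  shows "size (filter_mset (\<lambda>x. x \<in> U) \<sigma>) \<le> size (filter_mset (\<lambda>x. x \<in> U) \<tau>)"
  using assms by (induction rule: rel_mset_induct) auto

lemma rel_mset_antisym:
  assumes "rel_mset R \<sigma> \<tau>" "rel_mset R \<tau> \<sigma>" "set_mset \<sigma> \<subseteq> S" "set_mset \<tau> \<subseteq> S"
    and "reflp_on S R" "antisymp_on S R" "transp_on S R"
  shows "\<sigma> = \<tau>"
proof (rule multiset_eqI)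
  fix a
  let ?R = "\<lambda>b c. R b c \<and> b \<in> S \<and> c \<in> S"
  have rel: "rel_mset ?R \<sigma> \<tau>" "rel_mset ?R \<tau> \<sigma>"
    using assms(3,4) by (auto intro: multiset.rel_mono_strong[OF assms(1)] multiset.rel_mono_strong[OF assms(2)])
  have upset_size_eq: "size (filter_mset (\<lambda>x. x \<in> U) \<sigma>) = size (filter_mset (\<lambda>x. x \<in> U) \<tau>)"
    if "\<And>b c. b \<in> U \<Longrightarrow> ?R b c \<Longrightarrow> c \<in> U" for U
    using size_filter_mset_le_if_rel_mset[OF rel(1), of U] size_filter_mset_le_if_rel_mset[OF rel(2), of U]
      that by (meson antisym)
  show "count \<sigma> a = count \<tau> a"
  proof (cases "a \<in> S")
    case False
    with assms(3,4) show ?thesis by (metis count_eq_zero_iff subsetD)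
  next
    case True
    \<comment> \<open>count a = size of the up-set of a minus size of the strict up-set of a\<close>
    define U where "U = {b \<in> S. R a b}"
    define V where "V = {b \<in> S. R a b \<and> b \<noteq> a}"
    have U_V: "filter_mset (\<lambda>x. x \<in> U) M = filter_mset (\<lambda>x. x \<in> V) M + filter_mset (\<lambda>x. x = a) M"
      if "set_mset M \<subseteq> S" for M
      using that \<open>a \<in> S\<close> reflp_onD[OF assms(5)]
      by (intro multiset_eqI) (auto simp: U_def V_def not_in_iff)
    have "size (filter_mset (\<lambda>x. x \<in> U) \<sigma>) = size (filter_mset (\<lambda>x. x \<in> U) \<tau>)"
      using transp_onD[OF assms(7) \<open>a \<in> S\<close>] by (intro upset_size_eq) (auto simp: U_def)
    moreover have "size (filter_mset (\<lambda>x. x \<in> V) \<sigma>) = size (filter_mset (\<lambda>x. x \<in> V) \<tau>)"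
      using transp_onD[OF assms(7) \<open>a \<in> S\<close>] antisymp_onD[OF assms(6) \<open>a \<in> S\<close>]
      by (intro upset_size_eq) (auto simp: V_def)
    ultimately show ?thesis
      using U_V[OF assms(3)] U_V[OF assms(4)] by (simp add: count_conv_size_mset)
  qed
qed

lemma mle_antisym:
  assumes "mle R \<sigma> \<tau>" "mle R \<tau> \<sigma>" "set_mset \<sigma> \<subseteq> S" "set_mset \<tau> \<subseteq> S"
    and "reflp_on S R" "antisymp_on S R" "transp_on S R"
  shows "\<sigma> = \<tau>"
proof -
  have "size \<sigma> = size \<tau>" using assms(1,2) by (intro antisym mle_imp_size_le)
  then have "rel_mset R \<sigma> \<tau>" "rel_mset R \<tau> \<sigma>" using assms(1,2) by (simp_all add: mle_imp_rel_mset)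
  then show ?thesis using assms(3-) by (rule rel_mset_antisym)
qed

section \<open>The order on terms\<close>

lemma size_lt_size_Node: "t \<in># \<tau> \<Longrightarrow> size t < size (Node j \<tau>)"
  by (auto dest!: multi_member_split)

lemma tle_imp_size_le: "tle le s t \<Longrightarrow> size s \<le> size t"
proof (induction rule: tle.induct)
  case (node_node \<sigma> \<tau> i)
  then have "size_multiset size \<sigma> \<le> size_multiset size \<tau>"
    by (auto elim: size_multiset_mono_mle)
  then show ?case by simp
next
  case (var_node t \<tau> x j)
  then show ?case using size_lt_size_Node[of t \<tau> j] by simp
next
  case (node_below i j t \<tau> \<sigma>)
  then show ?case using size_lt_size_Node[of t \<tau> j] by simp
qed simp

lemma tle_Var_rightD:
  assumes "tle le s (Var y)"
  shows "\<exists>x. s = Var x \<and> le x y"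
  using assms by (cases rule: tle.cases) auto

lemma tle_Node_leftD:
  assumes "tle le (Node i \<sigma>) t"
  shows "\<exists>j \<tau>. t = Node j \<tau> \<and> i \<le> j"
  using assms by (cases rule: tle.cases) auto

lemma tle_Node_rightE:
  assumes "tle le s (Node k \<rho>)"
  obtains (member) r where "r \<in># \<rho>" "tle le s r" "\<And>i \<sigma>. s = Node i \<sigma> \<Longrightarrow> i \<le> k"
  | (multiset) \<sigma> where "s = Node k \<sigma>" "mle (tle le) \<sigma> \<rho>"
  using assms by (cases rule: tle.cases) auto

lemma tle_Node_rightI:
  "tle le s r \<Longrightarrow> r \<in># \<rho> \<Longrightarrow> (\<And>i \<sigma>. s = Node i \<sigma> \<Longrightarrow> i \<le> k) \<Longrightarrow> tle le s (Node k \<rho>)"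
  by (cases s) (auto intro: tle.var_node tle.node_below)

lemma tle_Node_size_leD:
  assumes "tle le (Node i \<sigma>) t" "size t \<le> size (Node i \<sigma>)"
  shows "\<exists>\<tau>. t = Node i \<tau> \<and> mle (tle le) \<sigma> \<tau>"
proof -
  obtain j \<tau> where t: "t = Node j \<tau>" using tle_Node_leftD[OF assms(1)] by blast
  from assms(1)[unfolded t] show ?thesis
  proof (cases rule: tle_Node_rightE)
    case (member r)
    then have "size (Node i \<sigma>) < size t"
      using t tle_imp_size_le size_lt_size_Node[of r \<tau> j] by fastforce
    with assms(2) show ?thesis by simp
  qed (use t in auto)
qed

lemma tle_refl: "(\<And>x. x \<in> set_tm t \<Longrightarrow> le x x) \<Longrightarrow> tle le t t"
proof (induction t)
  case (Var x)
  then show ?case by (auto intro: tle.var_var)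
next
  case (Node i \<sigma>)
  have "mle (tle le) \<sigma> \<sigma>" by (rule mle_refl) (use Node in auto)
  then show ?case by (rule tle.node_node)
qed

lemma reflp_on_tle: "reflp_on A le \<Longrightarrow> reflp_on {t. set_tm t \<subseteq> A} (tle le)"
  by (auto intro!: reflp_onI tle_refl dest: reflp_onD)

lemma transp_on_tle:
  assumes "transp_on A le"
  shows "transp_on {t. set_tm t \<subseteq> A} (tle le)"
proof -
  have "tle le s u" if "tle le s t" "tle le t u" "set_tm s \<subseteq> A" "set_tm t \<subseteq> A" "set_tm u \<subseteq> A"
    for s t u
    using that
  proof (induction u arbitrary: s t)
    case (Var z)
    then obtain x y where "s = Var x" "t = Var y" "le x y" "le y z"
      by (blast dest: tle_Var_rightD)
    with Var.prems(3-5) show ?case by (auto intro: tle.var_var transp_onD[OF assms])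
  next
    case (Node k \<rho>)
    have IH: "tle le s' r" if "r \<in># \<rho>" "tle le s' t'" "tle le t' r" "set_tm s' \<subseteq> A" "set_tm t' \<subseteq> A"
      for r s' t'
      using Node.IH[OF that(1-5)] Node.prems(5) that(1) by auto
    from \<open>tle le t (Node k \<rho>)\<close> show ?case
    proof (cases rule: tle_Node_rightE)
      case (member r)
      have "tle le s r" using IH[OF member(1) Node.prems(1) member(2) Node.prems(3,4)] .
      moreover have "i \<le> k" if "s = Node i \<sigma>" for i \<sigma>
        using tle_Node_leftD[of le i \<sigma> t] Node.prems(1) member(3) that by force
      ultimately show ?thesis by (rule tle_Node_rightI[OF _ member(1)])
    next
      case (multiset \<tau>)
      note t = multiset
      have \<tau>A: "set_tm t' \<subseteq> A" if "t' \<in># \<tau>" for t'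
        using Node.prems(4) t(1) that by auto
      from \<open>tle le s t\<close>[unfolded t(1)] show ?thesis
      proof (cases rule: tle_Node_rightE)
        case (member t')
        then obtain r where r: "r \<in># \<rho>" "tle le t' r" using mle_memD[OF t(2)] by blast
        have "tle le s r" using IH[OF r(1) member(2) r(2) Node.prems(3) \<tau>A[OF member(1)]] .
        then show ?thesis using member(3) by (rule tle_Node_rightI[OF _ r(1)])
      next
        case (multiset \<sigma>)
        from multiset(2) t(2) have "mle (tle le) \<sigma> \<rho>"
        proof (rule mle_trans)
          fix a b c assume "a \<in># \<sigma>" "b \<in># \<tau>" "c \<in># \<rho>" "tle le a b" "tle le b c"
          moreover from \<open>a \<in># \<sigma>\<close> have "set_tm a \<subseteq> A" using Node.prems(3) multiset(1) by auto
          ultimately show "tle le a c" using IH \<tau>A by blast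
        qed
        then show ?thesis using multiset(1) by (auto intro: tle.node_node)
      qed
    qed
  qed
  then show ?thesis by (auto intro: transp_onI)
qed

lemma antisymp_on_tle:
  assumes "reflp_on A le" "antisymp_on A le" "transp_on A le"
  shows "antisymp_on {t. set_tm t \<subseteq> A} (tle le)"
proof -
  have "s = t" if "tle le s t" "tle le t s" "set_tm s \<subseteq> A" "set_tm t \<subseteq> A" for s t
    using that
  proof (induction "size s" arbitrary: s t rule: less_induct)
    case less
    show ?case
    proof (cases s)
      case (Var x)
      with less.prems obtain y where "t = Var y" "le x y" "le y x"
        by (metis tle_Var_rightD tm.inject(1))
      with Var less.prems(3,4) show ?thesis by (auto dest: antisymp_onD[OF assms(2)])
    next
      case (Node i \<sigma>)
      have "size s = size t" using less.prems(1,2) by (intro antisym tle_imp_size_le)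
      then obtain \<tau> where t: "t = Node i \<tau>" "mle (tle le) \<sigma> \<tau>" "mle (tle le) \<tau> \<sigma>"
        using tle_Node_size_leD[of le i \<sigma> t] tle_Node_size_leD[of le i _ s] less.prems(1,2) Node
        by fastforce
      define S where "S = set_mset \<sigma> \<union> set_mset \<tau>"
      have S_A: "S \<subseteq> {t. set_tm t \<subseteq> A}" using less.prems(3,4) Node t(1) by (auto simp: S_def)
      have "antisymp_on S (tle le)"
      proof (rule antisymp_onI)
        fix a b assume "a \<in> S" "b \<in> S" "tle le a b" "tle le b a"
        moreover have "size a < size s"
          using \<open>a \<in> S\<close> \<open>size s = size t\<close> Node t(1)
          by (metis S_def Un_iff size_lt_size_Node)
        ultimately show "a = b" using less.hyps S_A by blast
      qed
      moreover have "reflp_on S (tle le)" "transp_on S (tle le)"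
        using reflp_on_subset[OF reflp_on_tle[OF assms(1)] S_A]
          transp_on_subset[OF transp_on_tle[OF assms(3)] S_A] .
      ultimately have "\<sigma> = \<tau>" using t(2,3) by (intro mle_antisym[of _ _ _ S]) (auto simp: S_def)
      with Node t(1) show ?thesis by simp
    qed
  qed
  then show ?thesis by (auto intro: antisymp_onI)
qed

lemma po_tle:
  assumes "po A le" "W \<subseteq> {t. set_tm t \<subseteq> A}"
  shows "po W (tle le)"
proof -
  have "reflp_on A le" "antisymp_on A le" "transp_on A le"
    using assms(1) unfolding po_def reflp_on_def antisymp_on_def transp_on_def by blast+
  then have "reflp_on W (tle le)" "antisymp_on W (tle le)" "transp_on W (tle le)"
    using reflp_on_tle antisymp_on_tle transp_on_tle assms(2)
    by (blast intro: reflp_on_subset antisymp_on_subset transp_on_subset)+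
  then show ?thesis unfolding po_def reflp_on_def antisymp_on_def transp_on_def by blast
qed

lemma tle_map_tm:
  assumes "tle le s t" "\<And>x y. x \<in> set_tm s \<Longrightarrow> y \<in> set_tm t \<Longrightarrow> le x y \<Longrightarrow> le' (f x) (f y)"
  shows "tle le' (map_tm f s) (map_tm f t)"
  using assms
proof (induction rule: tle.induct)
  case (var_var x y)
  then show ?case by (auto intro: tle.var_var)
next
  case (var_node t \<tau> x j)
  then have "tle le' (Var (f x)) (map_tm f t)" by auto
  with var_node(1) show ?case by (auto intro: tle.var_node[of "map_tm f t"])
next
  case (node_node \<sigma> \<tau> i)
  have "mle (tle le') (image_mset (map_tm f) \<sigma>) (image_mset (map_tm f) \<tau>)"
    unfolding mle_image_mset
    by (rule mle_mono_strong[OF node_node(1)]) (use node_node(2) in fastforce)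
  then show ?case by (auto intro: tle.node_node)
next
  case (node_below i j t \<tau> \<sigma>)
  then have "tle le' (map_tm f (Node i \<sigma>)) (map_tm f t)" by auto
  with node_below(1,2) show ?case by (auto intro: tle.node_below[of i j "map_tm f t"])
qed

lemma tle_map_tm_reflect:
  assumes "tle le' (map_tm f s) (map_tm f t)"
    and "\<And>x y. x \<in> set_tm s \<Longrightarrow> y \<in> set_tm t \<Longrightarrow> le' (f x) (f y) \<Longrightarrow> le x y"
  shows "tle le s t"
  using assms
proof (induction t arbitrary: s)
  case (Var y)
  then obtain x where "s = Var x" "le' (f x) (f y)"
    by (cases s) (auto dest: tle_Var_rightD)
  with Var.prems(2) show ?case by (auto intro: tle.var_var)
next
  case (Node k \<rho>)
  have IH: "tle le s' r"
    if "r \<in># \<rho>" "tle le' (map_tm f s') (map_tm f r)" "set_tm s' \<subseteq> set_tm s" for r s'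
    using Node.IH[OF that(1,2)] Node.prems(2) that(1,3) by auto
  from Node.prems(1) have "tle le' (map_tm f s) (Node k (image_mset (map_tm f) \<rho>))" by simp
  then show ?case
  proof (cases rule: tle_Node_rightE)
    case (member r')
    then obtain r where r: "r \<in># \<rho>" "r' = map_tm f r" by auto
    have "tle le s r" using IH[OF r(1)] r(2) member(2) by simp
    moreover have "i \<le> k" if "s = Node i \<sigma>" for i \<sigma> using member(3) that by simp
    ultimately show ?thesis by (rule tle_Node_rightI[OF _ r(1)])
  next
    case (multiset \<tau>')
    then obtain \<sigma> where s: "s = Node k \<sigma>" "\<tau>' = image_mset (map_tm f) \<sigma>" by (cases s) auto
    with multiset(2) have "mle (\<lambda>a b. tle le' (map_tm f a) (map_tm f b)) \<sigma> \<rho>"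
      by (simp add: mle_image_mset)
    then have "mle (tle le) \<sigma> \<rho>" by (rule mle_mono_strong) (use IH s(1) in auto)
    then show ?thesis using s(1) by (auto intro: tle.node_node)
  qed
qed

lemma tle_imp_fin_le: "tle le s t \<Longrightarrow> fin_le le (set_tm s) (set_tm t)"
proof (induction rule: tle.induct)
  case (node_node \<sigma> \<tau> i)
  show ?case unfolding fin_le_def
  proof
    fix x assume "x \<in> set_tm (Node i \<sigma>)"
    then obtain a where a: "a \<in># \<sigma>" "x \<in> set_tm a" by auto
    obtain b where "b \<in># \<tau>" "fin_le le (set_tm a) (set_tm b)"
      using mle_memD[OF node_node a(1)] by auto
    then show "\<exists>y\<in>set_tm (Node i \<tau>). le x y" using a(2) unfolding fin_le_def by fastforce
  qed
qed (fastforce simp: fin_le_def)+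

section \<open>Terms as a normal PO-dilator\<close>

lemma set_tm_subset_if_in_Tset: "t \<in> Tset n A \<Longrightarrow> set_tm t \<subseteq> A"
  by (induction rule: Tset.induct) auto

lemma map_tm_in_Tset: "t \<in> Tset n B \<Longrightarrow> f ` set_tm t \<subseteq> A \<Longrightarrow> map_tm f t \<in> Tset n A"
  by (induction rule: Tset.induct) (auto intro!: Tset.intros simp: image_subset_iff)

lemma set_tm_subset_if_in_Tminus: "t \<in> Tminus n A \<Longrightarrow> set_tm t \<subseteq> A"
  unfolding Tminus_def by (fastforce dest: set_tm_subset_if_in_Tset)

lemma map_tm_in_Tminus:
  "t \<in> Tminus n B \<Longrightarrow> f ` set_tm t \<subseteq> A \<Longrightarrow> map_tm f t \<in> Tminus n A"
  unfolding Tminus_def by (fastforce intro: map_tm_in_Tset)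

lemma quasi_emb_map_tm:
  assumes "quasi_emb A le B le' f" "W \<subseteq> {t. set_tm t \<subseteq> A}" "map_tm f ` W \<subseteq> W'"
  shows "quasi_emb W (tle le) W' (tle le') (map_tm f)"
proof -
  have "tle le s t" if "s \<in> W" "t \<in> W" "tle le' (map_tm f s) (map_tm f t)" for s t
  proof (rule tle_map_tm_reflect[OF that(3)])
    fix x y assume "x \<in> set_tm s" "y \<in> set_tm t" "le' (f x) (f y)"
    moreover from this(1,2) have "x \<in> A" "y \<in> A" using assms(2) that(1,2) by auto
    ultimately show "le x y" using assms(1) unfolding quasi_emb_def by blast
  qed
  with assms(3) show ?thesis unfolding quasi_emb_def by blast
qed

lemma emb_map_tm:
  assumes "emb A le B le' f" "W \<subseteq> {t. set_tm t \<subseteq> A}" "map_tm f ` W \<subseteq> W'"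
  shows "emb W (tle le) W' (tle le') (map_tm f)"
proof -
  have "tle le' (map_tm f s) (map_tm f t)" if "s \<in> W" "t \<in> W" "tle le s t" for s t
  proof (rule tle_map_tm[OF that(3)])
    fix x y assume "x \<in> set_tm s" "y \<in> set_tm t" "le x y"
    moreover from this(1,2) have "x \<in> A" "y \<in> A" using assms(2) that(1,2) by auto
    ultimately show "le' (f x) (f y)" using assms(1) unfolding emb_def by blast
  qed
  moreover have "quasi_emb W (tle le) W' (tle le') (map_tm f)"
    using assms by (auto simp: emb_def intro: quasi_emb_map_tm)
  ultimately show ?thesis unfolding emb_def by blast
qed

lemma image_map_tm_eq:
  assumes "W \<subseteq> {t. set_tm t \<subseteq> A}" "map_tm f ` W \<subseteq> W'"
    and "map_tm (inv_into A f) ` {t \<in> W'. set_tm t \<subseteq> f ` A} \<subseteq> W"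
  shows "map_tm f ` W = {t \<in> W'. set_tm t \<subseteq> f ` A}"
proof
  show "map_tm f ` W \<subseteq> {t \<in> W'. set_tm t \<subseteq> f ` A}"
  proof (rule image_subsetI)
    fix t assume "t \<in> W"
    with assms(1) have "set_tm t \<subseteq> A" by blast
    with \<open>t \<in> W\<close> assms(2) show "map_tm f t \<in> {t \<in> W'. set_tm t \<subseteq> f ` A}"
      by (auto simp: tm.set_map)
  qed
  show "{t \<in> W'. set_tm t \<subseteq> f ` A} \<subseteq> map_tm f ` W"
  proof
    fix t assume t: "t \<in> {t \<in> W'. set_tm t \<subseteq> f ` A}"
    then have "t = map_tm f (map_tm (inv_into A f) t)"
      by (auto simp: tm.map_comp f_inv_into_f intro!: tm.map_ident_strong[symmetric])
    with t assms(3) show "t \<in> map_tm f ` W" by blast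
  qed
qed

lemma normal_PO_dilator_map_tm:
  fixes Wa :: "'a set \<Rightarrow> 'a tm set" and Wb :: "'b set \<Rightarrow> 'b tm set"
  assumes Wa_set: "\<And>A. Wa A \<subseteq> {t. set_tm t \<subseteq> A}"
    and Wa_Wb: "\<And>A B (f :: 'a \<Rightarrow> 'b) t. t \<in> Wa A \<Longrightarrow> f ` set_tm t \<subseteq> B \<Longrightarrow> map_tm f t \<in> Wb B"
    and Wb_Wa: "\<And>A B (g :: 'b \<Rightarrow> 'a) t. t \<in> Wb B \<Longrightarrow> g ` set_tm t \<subseteq> A \<Longrightarrow> map_tm g t \<in> Wa A"
  shows "normal_PO_dilator Wa tle set_tm Wb tle set_tm map_tm map_tm (map_tm :: ('b \<Rightarrow> 'c) \<Rightarrow> _) map_tm"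
proof -
  have map_Wa: "map_tm f ` Wa A \<subseteq> Wb B" if "f \<in> A \<rightarrow> B" for A B and f :: "'a \<Rightarrow> 'b"
    using that Wa_set by (blast intro: Wa_Wb)
  have map_Wb: "map_tm (inv_into A f) ` {t \<in> Wb B. set_tm t \<subseteq> f ` A} \<subseteq> Wa A"
    for A B and f :: "'a \<Rightarrow> 'b"
    by (blast intro: Wb_Wa inv_into_into)
  show ?thesis unfolding normal_PO_dilator_def
  proof (intro conjI allI impI ballI)
    fix A :: "'a set" and le assume "po A le"
    then show "po (Wa A) (tle le)" using Wa_set by (rule po_tle)
  next
    fix A B le le' and f :: "'a \<Rightarrow> 'b"
    assume "po A le \<and> po B le' \<and> quasi_emb A le B le' f"
    then have f: "quasi_emb A le B le' f" "f \<in> A \<rightarrow> B" by (auto simp: quasi_emb_def)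
    show "quasi_emb (Wa A) (tle le) (Wb B) (tle le') (map_tm f)"
      using quasi_emb_map_tm[OF f(1) Wa_set map_Wa[OF f(2)]] .
  next
    fix A B le le' and f g :: "'a \<Rightarrow> 'b" and t
    assume "po A le \<and> po B le' \<and> quasi_emb A le B le' f \<and> quasi_emb A le B le' g
      \<and> (\<forall>x\<in>A. f x = g x)" and "t \<in> Wa A"
    then show "map_tm f t = map_tm g t" using Wa_set by (blast intro: tm.map_cong0)
  next
    fix t :: "'a tm" show "map_tm id t = t" by (simp add: tm.map_id)
  next
    fix f :: "'a \<Rightarrow> 'b" and g :: "'b \<Rightarrow> 'c" and t
    show "map_tm (g \<circ> f) t = map_tm g (map_tm f t)" by (simp add: tm.map_comp)
  next
    fix A B le le' and f :: "'a \<Rightarrow> 'b"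
    assume "po A le \<and> po B le' \<and> emb A le B le' f"
    then have f: "emb A le B le' f" "f \<in> A \<rightarrow> B" by (auto simp: emb_def quasi_emb_def)
    show "emb (Wa A) (tle le) (Wb B) (tle le') (map_tm f)"
      using emb_map_tm[OF f(1) Wa_set map_Wa[OF f(2)]] .
  next
    fix A :: "'a set" and t assume "t \<in> Wa A"
    then show "finite (set_tm t)" "set_tm t \<subseteq> A" using Wa_set by (auto simp: tm.set_finite)
  next
    fix f :: "'a \<Rightarrow> 'b" and t
    show "set_tm (map_tm f t) = f ` set_tm t" by (simp add: tm.set_map)
  next
    fix A B le le' and f :: "'a \<Rightarrow> 'b"
    assume "po A le \<and> po B le' \<and> emb A le B le' f"
    then have "f \<in> A \<rightarrow> B" by (auto simp: emb_def quasi_emb_def)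
    show "map_tm f ` Wa A = {t \<in> Wb B. set_tm t \<subseteq> f ` A}"
      using image_map_tm_eq[OF Wa_set map_Wa[OF \<open>f \<in> A \<rightarrow> B\<close>] map_Wb] .
  next
    fix le :: "'a \<Rightarrow> 'a \<Rightarrow> bool" and s t assume "tle le s t"
    then show "fin_le le (set_tm s) (set_tm t)" by (rule tle_imp_fin_le)
  qed
qed

theorem proposition5p5:
  fixes n :: nat
  shows "normal_PO_dilator (Tset n) tle set_tm (Tset n) tle set_tm map_tm map_tm map_tm map_tm
       \<and> normal_PO_dilator (Tminus (Suc n)) tle set_tm (Tminus (Suc n)) tle set_tm
            map_tm map_tm map_tm map_tm"
proof
  show "normal_PO_dilator (Tset n) tle set_tm (Tset n) tle set_tm map_tm map_tm map_tm map_tm"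
    by (rule normal_PO_dilator_map_tm) (auto dest: set_tm_subset_if_in_Tset intro: map_tm_in_Tset)
  show "normal_PO_dilator (Tminus (Suc n)) tle set_tm (Tminus (Suc n)) tle set_tm
      map_tm map_tm map_tm map_tm"
    by (rule normal_PO_dilator_map_tm) (auto dest: set_tm_subset_if_in_Tminus intro: map_tm_in_Tminus)
qed

end
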